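(* Let $A,B,\beta,\xi_0,\theta>0$. Let $v_{n,m}\colon[\xi_0,\infty)\to[0,\infty)$, for integers $n,m\ge0$, and let $w\colon[\xi_0,\infty)\to[0,\infty)$ be bounded. Suppose that for all $n,m\ge0$ and $\xi\ge\xi_0$: (1) $v_{n+1,m}(\xi)\le v_{n,m}(\xi)$; (2) $v_{n+N,m}(\xi)\le(1-A\xi^{-\beta})v_{n,m}(\xi)$ for all integers $N>B\log\xi$; (3) $v_{0,m}(\xi)\le\theta^{-m}w(\xi)$; (4) $w$ decays rapidly in $\xi$. Then for any $c>0$ the sequence $t_n=\sup\{v_{n,m}(\xi):\ \xi>\xi_0,\ m\in\mathbb Z_{\ge0},\ m<c\log n\}$ decays rapidly in $n$.
   Context: A function $w\colon D\subseteq(0,\infty)\to\mathbb R$ decays rapidly in $\xi$ if for each $\ell\ge1$ there is $C$ with $|w(\xi)|\le C\xi^{-\ell}$ for all $\xi\in D$. A sequence $\{t_n\}$ decays rapidly in $n$ if for each $\ell\ge1$ there is $C$ with $|t_n|\le Cn^{-\ell}$ for all $n\ge1$. *)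

theory Defs
  imports "HOL-Analysis.Analysis"
begin

definition decays_rapidly_on :: "real set \<Rightarrow> (real \<Rightarrow> real) \<Rightarrow> bool" where
  "decays_rapidly_on D w \<longleftrightarrow>
     (\<forall>l::nat. l \<ge> 1 \<longrightarrow> (\<exists>C. \<forall>\<xi>\<in>D. \<bar>w \<xi>\<bar> \<le> C * \<xi> powr (- real l)))"

definition seq_decays_rapidly :: "(nat \<Rightarrow> real) \<Rightarrow> bool" where
  "seq_decays_rapidly t \<longleftrightarrow>
     (\<forall>l::nat. l \<ge> 1 \<longrightarrow> (\<exists>C. \<forall>n::nat. n \<ge> 1 \<longrightarrow> \<bar>t n\<bar> \<le> C * real n powr (- real l)))"

end

(* Split according to whether xi >= n^(1/(2 beta)).  For large xi, monotonicity in n and (3) give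
   v n m xi <= theta^-m w xi <= n^(c |log theta|) w xi, and the rapid decay of w beyond n^(1/(2 beta))
   beats this polynomial factor.  For small xi we have xi^-beta >= n^(-1/2), and [0, n] contains about
   n / (B log xi + 1) >= n / (B log n / (2 beta) + 1) windows of length > B log xi, each contracting by
   1 - A n^(-1/2) <= exp (-A n^(-1/2)); hence
   v n m xi <= e^A exp (-A sqrt n / (B log n / (2 beta) + 1)) n^(c |log theta|) sup w,
   which also decays faster than any power of n. *)

theory Submission
  imports Defs "HOL-Real_Asymp.Real_Asymp"
begin

lemma periodic_contraction_exp_bound:
  fixes f :: "nat \<Rightarrow> real"
  assumes "decseq f" and f_nonneg: "\<And>k. 0 \<le> f k" and "N > 0" "0 \<le> a"
    and contract: "\<And>k. f (k + N) \<le> (1 - a) * f k"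
  shows "f n \<le> exp (a - a * n / N) * f 0"
proof -
  have iterate: "f (k * N) \<le> exp (- (k * a)) * f 0" for k
  proof (induction k)
    case 0
    show ?case by simp
  next
    case (Suc k)
    have "f (Suc k * N) \<le> (1 - a) * f (k * N)"
      using contract[of "k * N"] by (simp add: add.commute)
    also have "\<dots> \<le> exp (- a) * f (k * N)"
      using exp_ge_add_one_self[of "- a"] f_nonneg by (intro mult_right_mono) auto
    also have "\<dots> \<le> exp (- a) * (exp (- (k * a)) * f 0)"
      using Suc by simp
    also have "\<dots> = exp (- (Suc k * a)) * f 0"
      by (simp add: algebra_simps flip: exp_add)
    finally show ?case .
  qed
  define k where "k = n div N"
  have "n < k * N + N"
    using mod_less_divisor[OF \<open>N > 0\<close>, of n] div_mult_mod_eq[of n N] unfolding k_def by linarith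
  then have "real n < (real k + 1) * real N"
    by (simp add: distrib_right flip: of_nat_mult of_nat_add)
  then have "real n / N < real k + 1"
    using \<open>N > 0\<close> by (simp add: divide_less_eq)
  then have "- (k * a) \<le> a - a * n / N"
    using mult_right_mono[of "real n / N" "real k + 1" a] \<open>0 \<le> a\<close> by (simp add: algebra_simps)
  have "f n \<le> f (k * N)"
    using \<open>decseq f\<close> by (rule decseqD) (simp add: k_def)
  also have "\<dots> \<le> exp (- (k * a)) * f 0"
    by (rule iterate)
  also have "\<dots> \<le> exp (a - a * n / N) * f 0"
    using \<open>- (k * a) \<le> a - a * n / N\<close> f_nonneg by (intro mult_right_mono) auto
  finally show ?thesis .
qed

lemma inverse_power_le_powr:
  fixes \<theta> x c :: real
  assumes "\<theta> > 0" "x > 0" "real m \<le> c * ln x"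
  shows "inverse \<theta> ^ m \<le> x powr (c * \<bar>ln \<theta>\<bar>)"
proof -
  have "inverse \<theta> ^ m = exp (real m * - ln \<theta>)"
    using \<open>\<theta> > 0\<close> by (simp add: exp_of_nat_mult ln_inverse[symmetric])
  also have "\<dots> \<le> exp (c * ln x * \<bar>ln \<theta>\<bar>)"
  proof (rule exp_mono)
    have "real m * - ln \<theta> \<le> real m * \<bar>ln \<theta>\<bar>"
      by (intro mult_left_mono) auto
    also have "\<dots> \<le> c * ln x * \<bar>ln \<theta>\<bar>"
      using \<open>real m \<le> c * ln x\<close> by (intro mult_right_mono) auto
    finally show "real m * - ln \<theta> \<le> c * ln x * \<bar>ln \<theta>\<bar>" .
  qed
  also have "\<dots> = x powr (c * \<bar>ln \<theta>\<bar>)"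
    using \<open>x > 0\<close> by (simp add: powr_def algebra_simps)
  finally show ?thesis .
qed

lemma decays_rapidly_on_powr_bound:
  assumes "decays_rapidly_on D w" "\<delta> > 0"
  obtains C where "\<And>\<xi> x. \<xi> \<in> D \<Longrightarrow> 1 \<le> x \<Longrightarrow> x powr \<delta> \<le> \<xi> \<Longrightarrow> \<bar>w \<xi>\<bar> \<le> C * x powr - p"
proof -
  define j where "j = nat \<lceil>p / \<delta>\<rceil> + 1"
  have "j \<ge> 1"
    by (simp add: j_def)
  then obtain C where C: "\<And>\<xi>. \<xi> \<in> D \<Longrightarrow> \<bar>w \<xi>\<bar> \<le> C * \<xi> powr - real j"
    using assms(1) unfolding decays_rapidly_on_def by blast
  show thesis
  proof (rule that)
    fix \<xi> x :: real
    assume "\<xi> \<in> D" "1 \<le> x" "x powr \<delta> \<le> \<xi>"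
    then have "0 < \<xi>"
      using powr_gt_zero[of x \<delta>] by linarith
    have "0 \<le> C * \<xi> powr - real j"
      using C[OF \<open>\<xi> \<in> D\<close>] abs_ge_zero[of "w \<xi>"] by linarith
    with \<open>0 < \<xi>\<close> have "0 \<le> C"
      by (simp add: zero_le_mult_iff)
    have "\<xi> powr - real j \<le> (x powr \<delta>) powr - real j"
      using \<open>1 \<le> x\<close> \<open>x powr \<delta> \<le> \<xi>\<close> by (intro powr_mono2') auto
    also have "\<dots> = x powr - (\<delta> * j)"
      by (simp add: powr_powr)
    also have "\<dots> \<le> x powr - p"
    proof (rule powr_mono)
      have "p / \<delta> \<le> j"
        unfolding j_def by linarith
      then show "- (\<delta> * j) \<le> - p"
        using \<open>\<delta> > 0\<close> by (simp add: divide_le_eq mult.commute)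
    qed (use \<open>1 \<le> x\<close> in simp)
    finally show "\<bar>w \<xi>\<bar> \<le> C * x powr - p"
      using C[OF \<open>\<xi> \<in> D\<close>] \<open>0 \<le> C\<close> by (meson mult_left_mono order_trans)
  qed
qed

lemma seq_decays_rapidly_eventually:
  assumes "\<And>l. l \<ge> 1 \<Longrightarrow> \<exists>C. \<forall>\<^sub>F n in sequentially. \<bar>t n\<bar> \<le> C * real n powr - real l"
  shows "seq_decays_rapidly t"
  unfolding seq_decays_rapidly_def
proof (intro allI impI)
  fix l :: nat
  assume "l \<ge> 1"
  then obtain C n\<^sub>0 where C: "\<And>n. n \<ge> n\<^sub>0 \<Longrightarrow> \<bar>t n\<bar> \<le> C * real n powr - real l"
    using assms[OF \<open>l \<ge> 1\<close>] unfolding eventually_sequentially by blast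
  define C' where "C' = max C (\<Sum>k<n\<^sub>0. \<bar>t k\<bar> * real k powr real l)"
  show "\<exists>C. \<forall>n. 1 \<le> n \<longrightarrow> \<bar>t n\<bar> \<le> C * real n powr - real l"
  proof (intro exI allI impI)
    fix n :: nat
    assume "1 \<le> n"
    show "\<bar>t n\<bar> \<le> C' * real n powr - real l"
    proof (cases "n\<^sub>0 \<le> n")
      case True
      then show ?thesis
        using C[OF True] mult_right_mono[of C C' "real n powr - real l"] by (simp add: C'_def)
    next
      case False
      have "\<bar>t n\<bar> = \<bar>t n\<bar> * real n powr real l * real n powr - real l"
        using \<open>1 \<le> n\<close> by (simp add: powr_minus)
      also have "\<dots> \<le> (\<Sum>k<n\<^sub>0. \<bar>t k\<bar> * real k powr real l) * real n powr - real l"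
        using False by (intro mult_right_mono member_le_sum) auto
      also have "\<dots> \<le> C' * real n powr - real l"
        unfolding C'_def by (intro mult_right_mono) auto
      finally show ?thesis .
    qed
  qed
qed

lemma abs_cSup_le:
  fixes S :: "real set"
  assumes "S \<noteq> {}" "\<And>x. x \<in> S \<Longrightarrow> 0 \<le> x \<and> x \<le> b"
  shows "\<bar>Sup S\<bar> \<le> b"
proof -
  obtain x where "x \<in> S"
    using assms(1) by blast
  have "bdd_above S"
    using assms(2) by (auto simp: bdd_above_def)
  then have "0 \<le> Sup S"
    using \<open>x \<in> S\<close> assms(2) by (meson cSup_upper order_trans)
  moreover have "Sup S \<le> b"
    using assms by (intro cSup_least) auto
  ultimately show ?thesis
    by simp
qed

lemma log_window_length_bound:
  fixes B \<beta> \<xi> x :: real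
  assumes "B > 0" "\<beta> > 0" "\<xi> > 0" "x > 1" "\<xi> < x powr (1 / (2 * \<beta>))"
  shows "real (nat \<lfloor>B * ln \<xi>\<rfloor> + 1) \<le> B / (2 * \<beta>) * ln x + 1"
proof -
  have "ln \<xi> < ln (x powr (1 / (2 * \<beta>)))"
    using assms(3-5) by (subst ln_less_cancel_iff) auto
  then have "B * ln \<xi> < B * (ln x / (2 * \<beta>))"
    using \<open>B > 0\<close> by (simp add: mult_strict_left_mono del: times_divide_eq_right)
  then have "B * ln \<xi> < B / (2 * \<beta>) * ln x"
    by simp
  moreover have "0 < B / (2 * \<beta>) * ln x"
    using assms(1,2,4) by simp
  ultimately show ?thesis
    by linarith
qed

lemma powr_neg_half_le_powr:
  fixes \<beta> \<xi> x :: real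
  assumes "\<beta> > 0" "\<xi> > 0" "\<xi> < x powr (1 / (2 * \<beta>))"
  shows "x powr (- 1 / 2) \<le> \<xi> powr - \<beta>"
proof -
  have "x powr (- 1 / 2) = (x powr (1 / (2 * \<beta>))) powr - \<beta>"
    using \<open>\<beta> > 0\<close> by (simp add: powr_powr)
  also have "\<dots> \<le> \<xi> powr - \<beta>"
    using assms by (intro powr_mono2') auto
  finally show ?thesis .
qed

lemma contraction_bound_below_scale:
  fixes f :: "nat \<Rightarrow> real"
  assumes "decseq f" "\<And>k. 0 \<le> f k" "0 \<le> A" "B > 0" "\<beta> > 0" "\<xi> > 0" "n > 1"
    and small: "\<xi> < real n powr (1 / (2 * \<beta>))"
    and contract: "\<And>k N. B * ln \<xi> < real N \<Longrightarrow> f (k + N) \<le> (1 - A * \<xi> powr - \<beta>) * f k"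
  shows "f n \<le> exp (A - A * sqrt n / (B / (2 * \<beta>) * ln n + 1)) * f 0"
proof -
  define D where "D = B / (2 * \<beta>)"
  define N where "N = nat \<lfloor>B * ln \<xi>\<rfloor> + 1"
  define a where "a = A * real n powr (- 1 / 2)"
  have "1 < real n"
    using \<open>n > 1\<close> by simp
  have N_le: "real N \<le> D * ln n + 1"
    unfolding N_def D_def using assms(4-6) \<open>1 < real n\<close> small by (rule log_window_length_bound)
  have "a \<le> A * \<xi> powr - \<beta>"
    unfolding a_def using powr_neg_half_le_powr[OF assms(5,6) small] \<open>0 \<le> A\<close> by (rule mult_left_mono)
  have step: "f (k + N) \<le> (1 - a) * f k" for k
  proof -
    have "B * ln \<xi> < real N"
      unfolding N_def by linarith
    then have "f (k + N) \<le> (1 - A * \<xi> powr - \<beta>) * f k"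
      by (rule contract)
    also have "\<dots> \<le> (1 - a) * f k"
      using \<open>a \<le> A * \<xi> powr - \<beta>\<close> assms(2) by (intro mult_right_mono) auto
    finally show ?thesis .
  qed
  have "real n powr (- 1 / 2) \<le> 1"
    using powr_mono[of "- 1 / 2" 0 "real n"] \<open>1 < real n\<close> by simp
  then have "0 \<le> a" "a \<le> A"
    using \<open>0 \<le> A\<close> by (auto simp: a_def mult_left_le)
  have "a * n = A * (real n * real n powr (- 1 / 2))"
    by (simp add: a_def)
  also have "\<dots> = A * sqrt n"
    by (simp add: powr_mult_base powr_half_sqrt)
  finally have "A * sqrt n / (D * ln n + 1) \<le> a * n / N"
    using N_le \<open>0 \<le> A\<close> by (intro frac_le) (auto simp: N_def)
  then have "a - a * n / N \<le> A - A * sqrt n / (D * ln n + 1)"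
    using \<open>a \<le> A\<close> by linarith
  have "f n \<le> exp (a - a * n / N) * f 0"
    by (rule periodic_contraction_exp_bound[where f = f, OF assms(1,2) _ \<open>0 \<le> a\<close> step])
      (simp add: N_def)
  also have "\<dots> \<le> exp (A - A * sqrt n / (D * ln n + 1)) * f 0"
    using \<open>a - a * n / N \<le> A - A * sqrt n / (D * ln n + 1)\<close> assms(2) by (intro mult_right_mono) auto
  finally show ?thesis
    by (simp add: D_def)
qed

lemma powr_times_exp_sqrt_over_log_bounded:
  fixes a D p :: real
  assumes "a > 0" "D > 0"
  obtains M where "\<And>n. real n powr p * exp (- (a * sqrt n / (D * ln n + 1))) \<le> M"
proof -
  define f where "f n = real n powr p * exp (- (a * sqrt n / (D * ln n + 1)))" for n :: nat
  have "f \<longlonglongrightarrow> 0"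
    unfolding f_def using assms by real_asymp
  then have "Bseq f"
    by (rule convergent_imp_Bseq[OF convergentI])
  then obtain M where "\<forall>n. \<bar>f n\<bar> \<le> M"
    unfolding Bseq_def real_norm_def by blast
  then show thesis
    using that unfolding f_def by (meson abs_le_D1)
qed

locale log_window_contraction =
  fixes A B \<beta> \<xi>\<^sub>0 \<theta> :: real
    and v :: "nat \<Rightarrow> nat \<Rightarrow> real \<Rightarrow> real"
    and w :: "real \<Rightarrow> real"
  assumes A_pos: "A > 0" and B_pos: "B > 0" and \<beta>_pos: "\<beta> > 0"
    and \<xi>\<^sub>0_pos: "\<xi>\<^sub>0 > 0" and \<theta>_pos: "\<theta> > 0"
    and v_nonneg: "\<And>n m \<xi>. \<xi> \<ge> \<xi>\<^sub>0 \<Longrightarrow> v n m \<xi> \<ge> 0"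
    and w_nonneg: "\<And>\<xi>. \<xi> \<ge> \<xi>\<^sub>0 \<Longrightarrow> w \<xi> \<ge> 0"
    and w_bounded: "bounded (w ` {\<xi>\<^sub>0..})"
    and v_Suc_le: "\<And>n m \<xi>. \<xi> \<ge> \<xi>\<^sub>0 \<Longrightarrow> v (n + 1) m \<xi> \<le> v n m \<xi>"
    and v_contract: "\<And>n m \<xi> N. \<xi> \<ge> \<xi>\<^sub>0 \<Longrightarrow> real N > B * ln \<xi> \<Longrightarrow>
               v (n + N) m \<xi> \<le> (1 - A * \<xi> powr (- \<beta>)) * v n m \<xi>"
    and v_0_le: "\<And>m \<xi>. \<xi> \<ge> \<xi>\<^sub>0 \<Longrightarrow> v 0 m \<xi> \<le> inverse \<theta> ^ m * w \<xi>"
    and w_decays: "decays_rapidly_on {\<xi>\<^sub>0..} w"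
begin

lemma v_decseq:
  assumes "\<xi> \<ge> \<xi>\<^sub>0"
  shows "decseq (\<lambda>n. v n m \<xi>)"
  using v_Suc_le[OF assms] by (intro decseq_SucI) simp

lemma v_0_le_powr:
  assumes "\<xi> \<ge> \<xi>\<^sub>0" "x > 0" "real m \<le> c * ln x"
  shows "v 0 m \<xi> \<le> x powr (c * \<bar>ln \<theta>\<bar>) * w \<xi>"
proof -
  have "v 0 m \<xi> \<le> inverse \<theta> ^ m * w \<xi>"
    using v_0_le \<open>\<xi> \<ge> \<xi>\<^sub>0\<close> .
  also have "\<dots> \<le> x powr (c * \<bar>ln \<theta>\<bar>) * w \<xi>"
    using assms \<theta>_pos w_nonneg by (intro mult_right_mono inverse_power_le_powr) auto
  finally show ?thesis .
qed

lemma v_bound_above_scale: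
  obtains C where "\<And>n m \<xi>. \<xi> \<ge> \<xi>\<^sub>0 \<Longrightarrow> n \<ge> 1 \<Longrightarrow> real m \<le> c * ln n \<Longrightarrow>
    real n powr (1 / (2 * \<beta>)) \<le> \<xi> \<Longrightarrow> v n m \<xi> \<le> C * real n powr - p"
proof -
  define K where "K = c * \<bar>ln \<theta>\<bar>"
  have "1 / (2 * \<beta>) > 0"
    using \<beta>_pos by simp
  then obtain C where C: "\<And>\<xi> x. \<xi> \<in> {\<xi>\<^sub>0..} \<Longrightarrow> 1 \<le> x \<Longrightarrow> x powr (1 / (2 * \<beta>)) \<le> \<xi> \<Longrightarrow>
      \<bar>w \<xi>\<bar> \<le> C * x powr - (p + K)"
    by (rule decays_rapidly_on_powr_bound[OF w_decays, where p = "p + K"]) blast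
  show thesis
  proof (rule that)
    fix n m :: nat and \<xi> :: real
    assume \<xi>: "\<xi> \<ge> \<xi>\<^sub>0" and "n \<ge> 1" "real m \<le> c * ln n" and large: "real n powr (1 / (2 * \<beta>)) \<le> \<xi>"
    have "v n m \<xi> \<le> v 0 m \<xi>"
      using v_decseq[OF \<xi>] by (rule decseqD) simp
    also have "\<dots> \<le> real n powr K * w \<xi>"
      unfolding K_def using \<xi> \<open>n \<ge> 1\<close> \<open>real m \<le> c * ln n\<close> by (intro v_0_le_powr) auto
    also have "\<dots> \<le> real n powr K * (C * real n powr - (p + K))"
      using C[of \<xi> "real n"] \<xi> large \<open>n \<ge> 1\<close> by (intro mult_left_mono) auto
    also have "\<dots> = C * (real n powr K * real n powr - (p + K))"
      by (simp add: algebra_simps)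
    also have "\<dots> = C * real n powr - p"
      by (simp flip: powr_add)
    finally show "v n m \<xi> \<le> C * real n powr - p" .
  qed
qed

lemma v_bound_below_scale:
  obtains C where "\<And>n m \<xi>. \<xi> \<ge> \<xi>\<^sub>0 \<Longrightarrow> n > 1 \<Longrightarrow> real m \<le> c * ln n \<Longrightarrow>
    \<xi> < real n powr (1 / (2 * \<beta>)) \<Longrightarrow> v n m \<xi> \<le> C * real n powr - p"
proof -
  define K where "K = c * \<bar>ln \<theta>\<bar>"
  define D where "D = B / (2 * \<beta>)"
  obtain W where W: "\<And>\<xi>. \<xi> \<ge> \<xi>\<^sub>0 \<Longrightarrow> w \<xi> \<le> W"
    using w_bounded unfolding bounded_iff by (metis abs_le_D1 atLeast_iff image_eqI real_norm_def)
  obtain M where M: "\<And>n. real n powr (p + K) * exp (- (A * sqrt n / (D * ln n + 1))) \<le> M"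
    using powr_times_exp_sqrt_over_log_bounded[OF A_pos, of D] B_pos \<beta>_pos unfolding D_def by auto
  show thesis
  proof (rule that)
    fix n m :: nat and \<xi> :: real
    assume \<xi>: "\<xi> \<ge> \<xi>\<^sub>0" and "n > 1" "real m \<le> c * ln n" and small: "\<xi> < real n powr (1 / (2 * \<beta>))"
    define E where "E = exp (- (A * sqrt n / (D * ln n + 1)))"
    have "v n m \<xi> \<le> exp (A - A * sqrt n / (D * ln n + 1)) * v 0 m \<xi>"
      unfolding D_def using A_pos B_pos \<beta>_pos \<xi>\<^sub>0_pos \<xi> \<open>n > 1\<close> small
      by (intro contraction_bound_below_scale[where f = "\<lambda>k. v k m \<xi>"] v_decseq v_nonneg)
        (auto intro: v_contract)
    also have "\<dots> = exp A * E * v 0 m \<xi>"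
      by (simp add: E_def exp_diff exp_minus field_simps)
    also have "\<dots> \<le> exp A * E * (real n powr K * w \<xi>)"
      unfolding K_def using \<xi> \<open>n > 1\<close> \<open>real m \<le> c * ln n\<close>
      by (intro mult_left_mono v_0_le_powr) (auto simp: E_def)
    also have "\<dots> \<le> exp A * E * (real n powr K * W)"
      using W[OF \<xi>] by (intro mult_left_mono) (auto simp: E_def)
    also have "\<dots> = exp A * W * (real n powr (p + K) * E) * real n powr - p"
      using \<open>n > 1\<close> by (simp add: powr_minus powr_add field_simps)
    also have "\<dots> \<le> exp A * W * M * real n powr - p"
      using M[of n] W[OF \<xi>] w_nonneg[OF \<xi>] by (intro mult_right_mono mult_left_mono) (auto simp: E_def)
    finally show "v n m \<xi> \<le> exp A * W * M * real n powr - p" .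
  qed
qed

lemma v_bound:
  obtains C where "\<And>n m \<xi>. \<xi> \<ge> \<xi>\<^sub>0 \<Longrightarrow> n > 1 \<Longrightarrow> real m \<le> c * ln n \<Longrightarrow>
    v n m \<xi> \<le> C * real n powr - p"
proof -
  obtain C\<^sub>1 where C\<^sub>1: "\<And>n m \<xi>. \<xi> \<ge> \<xi>\<^sub>0 \<Longrightarrow> n \<ge> 1 \<Longrightarrow> real m \<le> c * ln n \<Longrightarrow>
      real n powr (1 / (2 * \<beta>)) \<le> \<xi> \<Longrightarrow> v n m \<xi> \<le> C\<^sub>1 * real n powr - p"
    by (rule v_bound_above_scale[where c = c and p = p]) (rule that)
  obtain C\<^sub>2 where C\<^sub>2: "\<And>n m \<xi>. \<xi> \<ge> \<xi>\<^sub>0 \<Longrightarrow> n > 1 \<Longrightarrow> real m \<le> c * ln n \<Longrightarrow>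
      \<xi> < real n powr (1 / (2 * \<beta>)) \<Longrightarrow> v n m \<xi> \<le> C\<^sub>2 * real n powr - p"
    by (rule v_bound_below_scale[where c = c and p = p]) (rule that)
  show thesis
  proof (rule that)
    fix n m :: nat and \<xi> :: real
    assume "\<xi> \<ge> \<xi>\<^sub>0" "n > 1" "real m \<le> c * ln n"
    then have "v n m \<xi> \<le> C\<^sub>1 * real n powr - p \<or> v n m \<xi> \<le> C\<^sub>2 * real n powr - p"
      using C\<^sub>1 C\<^sub>2 by (cases "real n powr (1 / (2 * \<beta>)) \<le> \<xi>") auto
    moreover have "C\<^sub>1 * real n powr - p \<le> max C\<^sub>1 C\<^sub>2 * real n powr - p"
      and "C\<^sub>2 * real n powr - p \<le> max C\<^sub>1 C\<^sub>2 * real n powr - p"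
      by (simp_all add: mult_right_mono)
    ultimately show "v n m \<xi> \<le> max C\<^sub>1 C\<^sub>2 * real n powr - p"
      by linarith
  qed
qed

text \<open>For \<open>n = 1\<close> the index set is empty and \<open>Sup {}\<close> is unspecified, which is why only
  eventual bounds are established.\<close>

lemma Sup_v_decays_rapidly:
  assumes "c > 0"
  shows "seq_decays_rapidly (\<lambda>n. Sup {v n m \<xi> | m \<xi>. \<xi> > \<xi>\<^sub>0 \<and> real m < c * ln (real n)})"
    (is "seq_decays_rapidly (\<lambda>n. Sup (?S n))")
proof (rule seq_decays_rapidly_eventually)
  fix l :: nat
  obtain C where C: "\<And>n m \<xi>. \<xi> \<ge> \<xi>\<^sub>0 \<Longrightarrow> n > 1 \<Longrightarrow> real m \<le> c * ln n \<Longrightarrow>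
      v n m \<xi> \<le> C * real n powr - real l"
    by (rule v_bound[where c = c and p = "real l"]) (rule that)
  have "\<bar>Sup (?S n)\<bar> \<le> C * real n powr - real l" if "n \<ge> 2" for n
  proof (rule abs_cSup_le)
    have "0 < c * ln n"
      using \<open>c > 0\<close> \<open>n \<ge> 2\<close> by simp
    then have "v n 0 (\<xi>\<^sub>0 + 1) \<in> ?S n"
      by (auto intro!: exI[of _ 0] exI[of _ "\<xi>\<^sub>0 + 1"])
    then show "?S n \<noteq> {}"
      by blast
  next
    fix x
    assume "x \<in> ?S n"
    then obtain m \<xi> where "x = v n m \<xi>" "\<xi> > \<xi>\<^sub>0" "real m < c * ln n"
      by blast
    then show "0 \<le> x \<and> x \<le> C * real n powr - real l"
      using v_nonneg C \<open>n \<ge> 2\<close> by simp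
  qed
  then have "\<forall>\<^sub>F n in sequentially. \<bar>Sup (?S n)\<bar> \<le> C * real n powr - real l"
    by (rule eventually_sequentiallyI)
  then show "\<exists>C. \<forall>\<^sub>F n in sequentially. \<bar>Sup (?S n)\<bar> \<le> C * real n powr - real l"
    by (rule exI)
qed

end

theorem proposition7p5:
  fixes A B \<beta> \<xi>\<^sub>0 \<theta> c :: real
    and v :: "nat \<Rightarrow> nat \<Rightarrow> real \<Rightarrow> real"
    and w :: "real \<Rightarrow> real"
  assumes "A > 0" "B > 0" "\<beta> > 0" "\<xi>\<^sub>0 > 0" "\<theta> > 0"
    and v_nonneg: "\<And>n m \<xi>. \<xi> \<ge> \<xi>\<^sub>0 \<Longrightarrow> v n m \<xi> \<ge> 0"
    and w_nonneg: "\<And>\<xi>. \<xi> \<ge> \<xi>\<^sub>0 \<Longrightarrow> w \<xi> \<ge> 0"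
    and w_bounded: "bounded (w ` {\<xi>\<^sub>0..})"
    and h1: "\<And>n m \<xi>. \<xi> \<ge> \<xi>\<^sub>0 \<Longrightarrow> v (n + 1) m \<xi> \<le> v n m \<xi>"
    and h2: "\<And>n m \<xi> N. \<xi> \<ge> \<xi>\<^sub>0 \<Longrightarrow> real N > B * ln \<xi> \<Longrightarrow>
               v (n + N) m \<xi> \<le> (1 - A * \<xi> powr (- \<beta>)) * v n m \<xi>"
    and h3: "\<And>m \<xi>. \<xi> \<ge> \<xi>\<^sub>0 \<Longrightarrow> v 0 m \<xi> \<le> inverse \<theta> ^ m * w \<xi>"
    and h4: "decays_rapidly_on {\<xi>\<^sub>0..} w"
    and "c > 0"
  shows "seq_decays_rapidly
           (\<lambda>n. Sup {v n m \<xi> | m \<xi>. \<xi> > \<xi>\<^sub>0 \<and> real m < c * ln (real n)})"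
proof -
  interpret log_window_contraction A B \<beta> \<xi>\<^sub>0 \<theta> v w
    by unfold_locales (fact assms)+
  show ?thesis
    using \<open>c > 0\<close> by (rule Sup_v_decays_rapidly)
qed

end
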